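(* Let $A,B$ be elementary algebras. The vector space $A\otimes_k B$ with the bilinear multiplication determined by $$(a\otimes b)\cdot(a'\otimes b')=aa'\otimes b_1b'+aa'_1\otimes b_2b'=aa'\otimes bb'-aa'_2\otimes b_2b'\qquad(a,a'\in A,\ b,b'\in B)$$ is an associative unital $k$-algebra (with unit $1\otimes 1$).
   Context: $k$ is a field; algebras are finite-dimensional associative unital $k$-algebras. An algebra is elementary if all its simple modules are one-dimensional. For an elementary algebra $A$, $\mathrm{rad}(A)$ is its Jacobson radical and $\bar A$ is a fixed subalgebra of $A$ with $A=\bar A\oplus\mathrm{rad}(A)$ as vector spaces (so $\bar A\cong A/\mathrm{rad}(A)$ is a product of copies of $k$; e.g. the span of the trivial paths when $A$ is given by a quiver with relations). For $a\in A$ write $a=a_1+a_2$ with $a_1\in\bar A$, $a_2\in\mathrm{rad}(A)$; similarly $b=b_1+b_2$ for $b\in B$. This algebra is called the trivially twisted tensor product and denoted $A\otimes_0 B$. *)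

theory Defs
  imports Main "HOL.Vector_Spaces"
begin

definition k_algebra :: "('k::field \<Rightarrow> 'a::ring_1 \<Rightarrow> 'a) \<Rightarrow> bool" where
  "k_algebra s \<longleftrightarrow> vector_space s \<and>
     (\<forall>c x y. s c (x * y) = s c x * y \<and> s c (x * y) = x * s c y)"

definition is_basis :: "('k::field \<Rightarrow> 'v::ab_group_add \<Rightarrow> 'v) \<Rightarrow> 'v set \<Rightarrow> bool" where
  "is_basis s X \<longleftrightarrow> \<not> module.dependent s X \<and> module.span s X = UNIV"

definition fin_dim :: "('k::field \<Rightarrow> 'v::ab_group_add \<Rightarrow> 'v) \<Rightarrow> bool" where
  "fin_dim s \<longleftrightarrow> (\<exists>X. finite X \<and> is_basis s X)"

definition fd_algebra :: "('k::field \<Rightarrow> 'a::ring_1 \<Rightarrow> 'a) \<Rightarrow> bool" where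
  "fd_algebra s \<longleftrightarrow> k_algebra s \<and> fin_dim s"

definition left_ideal :: "('k::field \<Rightarrow> 'a::ring_1 \<Rightarrow> 'a) \<Rightarrow> 'a set \<Rightarrow> bool" where
  "left_ideal s L \<longleftrightarrow> module.subspace s L \<and> (\<forall>a x. x \<in> L \<longrightarrow> a * x \<in> L)"

definition maximal_left_ideal :: "('k::field \<Rightarrow> 'a::ring_1 \<Rightarrow> 'a) \<Rightarrow> 'a set \<Rightarrow> bool" where
  "maximal_left_ideal s L \<longleftrightarrow> left_ideal s L \<and> L \<noteq> UNIV \<and>
     (\<forall>J. left_ideal s J \<and> L \<subseteq> J \<longrightarrow> J = L \<or> J = UNIV)"

definition jac_rad :: "('k::field \<Rightarrow> 'a::ring_1 \<Rightarrow> 'a) \<Rightarrow> 'a set" where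
  "jac_rad s = \<Inter> {L. maximal_left_ideal s L}"

text \<open>A left A-module with carrier M (a set of elements of some type 'm), addition pl,
  zero z and action act.  Its k-vector space structure is c \<cdot> m = act (s c 1) m.\<close>
definition left_module ::
  "('k::field \<Rightarrow> 'a::ring_1 \<Rightarrow> 'a) \<Rightarrow> 'm set \<Rightarrow> ('m \<Rightarrow> 'm \<Rightarrow> 'm) \<Rightarrow> 'm \<Rightarrow> ('a \<Rightarrow> 'm \<Rightarrow> 'm) \<Rightarrow> bool"
where
  "left_module s M pl z act \<longleftrightarrow>
     z \<in> M \<and>
     (\<forall>x\<in>M. \<forall>y\<in>M. pl x y \<in> M) \<and>
     (\<forall>x\<in>M. \<forall>y\<in>M. \<forall>w\<in>M. pl (pl x y) w = pl x (pl y w)) \<and>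
     (\<forall>x\<in>M. \<forall>y\<in>M. pl x y = pl y x) \<and>
     (\<forall>x\<in>M. pl z x = x) \<and>
     (\<forall>x\<in>M. \<exists>y\<in>M. pl x y = z) \<and>
     (\<forall>a. \<forall>x\<in>M. act a x \<in> M) \<and>
     (\<forall>x\<in>M. act 1 x = x) \<and>
     (\<forall>a b. \<forall>x\<in>M. act (a * b) x = act a (act b x)) \<and>
     (\<forall>a b. \<forall>x\<in>M. act (a + b) x = pl (act a x) (act b x)) \<and>
     (\<forall>a. \<forall>x\<in>M. \<forall>y\<in>M. act a (pl x y) = pl (act a x) (act a y))"

definition submodule :: "'m set \<Rightarrow> 'm set \<Rightarrow> ('m \<Rightarrow> 'm \<Rightarrow> 'm) \<Rightarrow> 'm \<Rightarrow> ('a \<Rightarrow> 'm \<Rightarrow> 'm) \<Rightarrow> bool"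
where
  "submodule N M pl z act \<longleftrightarrow> N \<subseteq> M \<and> z \<in> N \<and>
     (\<forall>x\<in>N. \<forall>y\<in>N. pl x y \<in> N) \<and> (\<forall>a. \<forall>x\<in>N. act a x \<in> N)"

definition simple_module ::
  "('k::field \<Rightarrow> 'a::ring_1 \<Rightarrow> 'a) \<Rightarrow> 'm set \<Rightarrow> ('m \<Rightarrow> 'm \<Rightarrow> 'm) \<Rightarrow> 'm \<Rightarrow> ('a \<Rightarrow> 'm \<Rightarrow> 'm) \<Rightarrow> bool"
where
  "simple_module s M pl z act \<longleftrightarrow> left_module s M pl z act \<and> M \<noteq> {z} \<and>
     (\<forall>N. submodule N M pl z act \<longrightarrow> N = {z} \<or> N = M)"

definition one_dimensional ::
  "('k::field \<Rightarrow> 'a::ring_1 \<Rightarrow> 'a) \<Rightarrow> 'm set \<Rightarrow> 'm \<Rightarrow> ('a \<Rightarrow> 'm \<Rightarrow> 'm) \<Rightarrow> bool"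
where
  "one_dimensional s M z act \<longleftrightarrow>
     (\<exists>m\<in>M. m \<noteq> z \<and> (\<forall>x\<in>M. \<exists>c. x = act (s c 1) m))"

text \<open>Every simple module over A is
  isomorphic to A/L for a maximal left ideal L, and A/L injects into A (choice of coset
  representatives), so it suffices (and is equivalent) to quantify over modules whose carrier
  is a subset of the underlying type 'a of A.\<close>
definition elementary :: "('k::field \<Rightarrow> 'a::ring_1 \<Rightarrow> 'a) \<Rightarrow> bool" where
  "elementary s \<longleftrightarrow>
     (\<forall>(M::'a set) pl z act. simple_module s M pl z act \<longrightarrow> one_dimensional s M z act)"

definition subalgebra :: "('k::field \<Rightarrow> 'a::ring_1 \<Rightarrow> 'a) \<Rightarrow> 'a set \<Rightarrow> bool" where
  "subalgebra s S \<longleftrightarrow> module.subspace s S \<and> 1 \<in> S \<and> (\<forall>x\<in>S. \<forall>y\<in>S. x * y \<in> S)"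

definition radical_splitting :: "('k::field \<Rightarrow> 'a::ring_1 \<Rightarrow> 'a) \<Rightarrow> 'a set \<Rightarrow> bool" where
  "radical_splitting s S \<longleftrightarrow> subalgebra s S \<and> S \<inter> jac_rad s = {0} \<and>
     (\<forall>a. \<exists>x\<in>S. \<exists>y\<in>jac_rad s. a = x + y)"

text \<open>Components a = a1 + a2 with a1 in Abar and a2 in rad(A).\<close>
definition comp1 :: "('k::field \<Rightarrow> 'a::ring_1 \<Rightarrow> 'a) \<Rightarrow> 'a set \<Rightarrow> 'a \<Rightarrow> 'a" where
  "comp1 s S a = (THE x. x \<in> S \<and> a - x \<in> jac_rad s)"

definition comp2 :: "('k::field \<Rightarrow> 'a::ring_1 \<Rightarrow> 'a) \<Rightarrow> 'a set \<Rightarrow> 'a \<Rightarrow> 'a" where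
  "comp2 s S a = a - comp1 s S a"

definition bilinear ::
  "('k::field \<Rightarrow> 'u::ab_group_add \<Rightarrow> 'u) \<Rightarrow> ('k \<Rightarrow> 'v::ab_group_add \<Rightarrow> 'v) \<Rightarrow>
   ('k \<Rightarrow> 'w::ab_group_add \<Rightarrow> 'w) \<Rightarrow> ('u \<Rightarrow> 'v \<Rightarrow> 'w) \<Rightarrow> bool" where
  "bilinear s1 s2 s3 f \<longleftrightarrow>
     (\<forall>y. Vector_Spaces.linear s1 s3 (\<lambda>x. f x y)) \<and> (\<forall>x. Vector_Spaces.linear s2 s3 (\<lambda>y. f x y))"

definition is_tensor_product ::
  "('k::field \<Rightarrow> 'u::ab_group_add \<Rightarrow> 'u) \<Rightarrow> ('k \<Rightarrow> 'v::ab_group_add \<Rightarrow> 'v) \<Rightarrow>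
   ('k \<Rightarrow> 't::ab_group_add \<Rightarrow> 't) \<Rightarrow> ('u \<Rightarrow> 'v \<Rightarrow> 't) \<Rightarrow> bool" where
  "is_tensor_product s1 s2 s3 tp \<longleftrightarrow> vector_space s3 \<and> bilinear s1 s2 s3 tp \<and>
     (\<exists>X Y. is_basis s1 X \<and> is_basis s2 Y \<and>
        inj_on (\<lambda>(x, y). tp x y) (X \<times> Y) \<and> is_basis s3 ((\<lambda>(x, y). tp x y) ` (X \<times> Y)))"

end

theory Submission
  imports Defs
begin

text \<open>
  Because the Jacobson radical is a two-sided ideal, the projection \<open>a \<mapsto> a\<^sub>1\<close> of \<open>A = Abar \<oplus> rad A\<close>
  onto the subalgebra \<open>Abar\<close> is an idempotent algebra endomorphism, and likewise for \<open>B\<close>.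
  For any two idempotent algebra endomorphisms the twisted formula on pure tensors is
  associative with unit \<open>1 \<otimes> 1\<close> by a direct computation.  Pure tensors span \<open>A \<otimes> B\<close>, so the
  bilinear multiplication exists (define it on a product basis) and associativity and the
  unit laws extend from pure tensors by multilinearity.
\<close>

lemma left_ideal_iff:
  assumes "k_algebra s"
  shows "left_ideal s L \<longleftrightarrow> 0 \<in> L \<and> (\<forall>x\<in>L. \<forall>y\<in>L. x + y \<in> L) \<and> (\<forall>c. \<forall>x\<in>L. s c x \<in> L) \<and>
     (\<forall>a. \<forall>x\<in>L. a * x \<in> L)"
  using assms by (auto simp: left_ideal_def module.subspace_def module_iff_vector_space k_algebra_def)

lemma left_ideal_add_principal:
  assumes "k_algebra s" and "left_ideal s L"
  shows "left_ideal s {l + a * v |l a. l \<in> L}"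
proof -
  have scale_mult: "s c (a * v) = s c a * v" for c a
    using assms(1) by (simp add: k_algebra_def)
  have scale_add: "s c (x + y) = s c x + s c y" for c x y
    using assms(1) by (simp add: k_algebra_def vector_space_def)
  have "l + a * v + (l' + a' * v) = (l + l') + (a + a') * v" for l a l' a'
    by (simp add: algebra_simps)
  moreover have "s c (l + a * v) = s c l + s c a * v" for c l a
    by (simp add: scale_add scale_mult)
  moreover have "b * (l + a * v) = b * l + (b * a) * v" for b l a
    by (simp add: algebra_simps)
  moreover have "0 = 0 + 0 * v" by simp
  ultimately show ?thesis
    using assms(2) unfolding left_ideal_iff[OF assms(1)] by blast
qed

text \<open>For \<open>r \<notin> L\<close>, \<open>a \<mapsto> a r\<close> identifies \<open>A/{a. a * r \<in> L}\<close> with \<open>(A r + L)/L = A/L\<close>, a simple module.\<close>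
lemma maximal_left_ideal_colon:
  assumes ka: "k_algebra s" and L: "maximal_left_ideal s L" and r: "r \<notin> L"
  shows "maximal_left_ideal s {a. a * r \<in> L}"
proof -
  define Q where "Q = {a. a * r \<in> L}"
  have scale_mult: "s c (a * r) = s c a * r" for c a
    using ka by (simp add: k_algebra_def)
  have LI: "left_ideal s L" and Lmax: "\<And>J. left_ideal s J \<Longrightarrow> L \<subseteq> J \<Longrightarrow> J = L \<or> J = UNIV"
    using L by (auto simp: maximal_left_ideal_def)
  have "left_ideal s Q"
    using LI unfolding left_ideal_iff[OF ka] Q_def by (auto simp: distrib_right mult.assoc scale_mult[symmetric])
  moreover have "1 \<notin> Q"
    using r by (simp add: Q_def)
  moreover have "J = Q \<or> J = UNIV" if J: "left_ideal s J" and QJ: "Q \<subseteq> J" for J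
  proof (cases "J \<subseteq> Q")
    case False
    then obtain j where "j \<in> J" "j \<notin> Q" by auto
    have "0 \<in> L" using LI unfolding left_ideal_iff[OF ka] by blast
    define K where "K = {l + a * (j * r) |l a. l \<in> L}"
    have K: "left_ideal s K"
      unfolding K_def by (rule left_ideal_add_principal[OF ka LI])
    have "L \<subseteq> K"
      unfolding K_def by (force intro: exI[of _ 0])
    moreover have "K \<noteq> L"
    proof -
      have "j * r = 0 + 1 * (j * r)" by simp
      then have "j * r \<in> K" unfolding K_def using \<open>0 \<in> L\<close> by blast
      moreover have "j * r \<notin> L" using \<open>j \<notin> Q\<close> by (simp add: Q_def)
      ultimately show ?thesis by blast
    qed
    ultimately have "K = UNIV"
      using Lmax[OF K] by blast
    have "b \<in> J" for b
    proof -
      obtain l a where "l \<in> L" and "b * r = l + a * (j * r)"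
        using \<open>K = UNIV\<close> unfolding K_def by blast
      then have "b - a * j \<in> Q"
        by (simp add: Q_def algebra_simps)
      then have "(b - a * j) + a * j \<in> J"
        using QJ J \<open>j \<in> J\<close> unfolding left_ideal_iff[OF ka] by blast
      then show ?thesis by simp
    qed
    then show ?thesis by auto
  qed (use QJ in auto)
  ultimately have "maximal_left_ideal s Q"
    unfolding maximal_left_ideal_def by blast
  then show ?thesis by (simp add: Q_def)
qed

lemma jac_rad_mult_left: "x \<in> jac_rad s \<Longrightarrow> a * x \<in> jac_rad s"
  by (auto simp: jac_rad_def maximal_left_ideal_def left_ideal_def)

lemma jac_rad_mult_right:
  assumes "k_algebra s" and "x \<in> jac_rad s"
  shows "x * r \<in> jac_rad s"
  unfolding jac_rad_def
proof
  fix L assume "L \<in> {L. maximal_left_ideal s L}"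
  then have L: "maximal_left_ideal s L" by simp
  show "x * r \<in> L"
  proof (cases "r \<in> L")
    case True
    then show ?thesis using L by (auto simp: maximal_left_ideal_def left_ideal_def)
  next
    case False
    then have "x \<in> {a. a * r \<in> L}"
      using assms(2) maximal_left_ideal_colon[OF assms(1) L] by (auto simp: jac_rad_def)
    then show ?thesis by simp
  qed
qed

lemma jac_rad_subspace:
  assumes "k_algebra s"
  shows "module.subspace s (jac_rad s)"
proof -
  interpret vector_space s using assms by (simp add: k_algebra_def)
  show ?thesis
    unfolding jac_rad_def by (rule subspace_Inter) (simp add: maximal_left_ideal_def left_ideal_def)
qed

definition idempotent_algebra_endomorphism :: "('k::field \<Rightarrow> 'a::ring_1 \<Rightarrow> 'a) \<Rightarrow> ('a \<Rightarrow> 'a) \<Rightarrow> bool"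
where
  "idempotent_algebra_endomorphism s p \<longleftrightarrow>
     Vector_Spaces.linear s s p \<and> p 1 = 1 \<and> (\<forall>x y. p (x * y) = p x * p y) \<and> (\<forall>x. p (p x) = p x)"

lemma idempotent_algebra_endomorphism_simps:
  assumes "idempotent_algebra_endomorphism s p"
  shows "p (x + y) = p x + p y" "p (x - y) = p x - p y" "p (s c x) = s c (p x)"
    "p 1 = 1" "p (x * y) = p x * p y" "p (p x) = p x"
proof -
  interpret Vector_Spaces.linear s s p
    using assms by (simp add: idempotent_algebra_endomorphism_def)
  show "p (x + y) = p x + p y" "p (x - y) = p x - p y" "p (s c x) = s c (p x)"
    by (simp_all add: add diff scale)
  show "p 1 = 1" "p (x * y) = p x * p y" "p (p x) = p x"
    using assms by (simp_all add: idempotent_algebra_endomorphism_def)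
qed

context
  fixes s :: "'k::field \<Rightarrow> 'a::ring_1 \<Rightarrow> 'a" and S :: "'a set"
  assumes ka: "k_algebra s" and rs: "radical_splitting s S"
begin

interpretation vector_space s
  using ka by (simp add: k_algebra_def)

lemma comp1_unique:
  assumes "x \<in> S" "a - x \<in> jac_rad s" "x' \<in> S" "a - x' \<in> jac_rad s"
  shows "x = x'"
proof -
  have "x - x' \<in> S"
    using rs assms(1,3) by (simp add: radical_splitting_def subalgebra_def subspace_diff)
  moreover have "x - x' \<in> jac_rad s"
    using subspace_diff[OF jac_rad_subspace[OF ka] assms(4,2)] by simp
  moreover have "S \<inter> jac_rad s = {0}"
    using rs by (simp add: radical_splitting_def)
  ultimately have "x - x' = 0"
    by (metis IntI singletonD)
  then show ?thesis by simp
qed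

lemma comp1_spec: "comp1 s S a \<in> S \<and> a - comp1 s S a \<in> jac_rad s"
proof -
  obtain x y where "x \<in> S" "y \<in> jac_rad s" "a = x + y"
    using rs unfolding radical_splitting_def by blast
  then have x: "x \<in> S \<and> a - x \<in> jac_rad s" by simp
  show ?thesis
    unfolding comp1_def using x by (rule theI) (metis x comp1_unique)
qed

lemma comp1_eqI: "x \<in> S \<Longrightarrow> a - x \<in> jac_rad s \<Longrightarrow> comp1 s S a = x"
  by (metis comp1_unique comp1_spec)

lemma comp1_add: "comp1 s S (a + b) = comp1 s S a + comp1 s S b"
proof (rule comp1_eqI)
  show "comp1 s S a + comp1 s S b \<in> S"
    using rs comp1_spec by (simp add: radical_splitting_def subalgebra_def subspace_add)
  have "(a - comp1 s S a) + (b - comp1 s S b) \<in> jac_rad s"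
    using subspace_add[OF jac_rad_subspace[OF ka]] comp1_spec by blast
  then show "a + b - (comp1 s S a + comp1 s S b) \<in> jac_rad s"
    by (simp add: algebra_simps)
qed

lemma comp1_scale: "comp1 s S (s c a) = s c (comp1 s S a)"
proof (rule comp1_eqI)
  show "s c (comp1 s S a) \<in> S"
    using rs comp1_spec by (simp add: radical_splitting_def subalgebra_def subspace_scale)
  have "s c (a - comp1 s S a) \<in> jac_rad s"
    using subspace_scale[OF jac_rad_subspace[OF ka]] comp1_spec by blast
  then show "s c a - s c (comp1 s S a) \<in> jac_rad s"
    by (simp add: scale_right_diff_distrib)
qed

lemma comp1_mult: "comp1 s S (a * b) = comp1 s S a * comp1 s S b"
proof (rule comp1_eqI)
  show "comp1 s S a * comp1 s S b \<in> S"
    using rs comp1_spec by (auto simp: radical_splitting_def subalgebra_def)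
  have "(a - comp1 s S a) * b \<in> jac_rad s"
    using jac_rad_mult_right[OF ka] comp1_spec by blast
  moreover have "comp1 s S a * (b - comp1 s S b) \<in> jac_rad s"
    using jac_rad_mult_left comp1_spec by blast
  ultimately have "(a - comp1 s S a) * b + comp1 s S a * (b - comp1 s S b) \<in> jac_rad s"
    using subspace_add[OF jac_rad_subspace[OF ka]] by blast
  then show "a * b - comp1 s S a * comp1 s S b \<in> jac_rad s"
    by (simp add: algebra_simps)
qed

lemma comp1_idempotent_algebra_endomorphism: "idempotent_algebra_endomorphism s (comp1 s S)"
proof -
  have "0 \<in> jac_rad s"
    using subspace_0[OF jac_rad_subspace[OF ka]] .
  then have "comp1 s S 1 = 1" and "comp1 s S (comp1 s S a) = comp1 s S a" for a
    using rs comp1_spec[of a] by (simp_all add: comp1_eqI radical_splitting_def subalgebra_def)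
  moreover have "Vector_Spaces.linear s s (comp1 s S)"
    using ka by (simp add: linear_iff k_algebra_def comp1_add comp1_scale)
  ultimately show ?thesis
    by (simp add: idempotent_algebra_endomorphism_def comp1_mult)
qed

end

lemma bilinear_simps:
  assumes "bilinear s1 s2 s3 f"
  shows "f (x + x') y = f x y + f x' y" "f x (y + y') = f x y + f x y'"
    and "f (x - x') y = f x y - f x' y" "f x (y - y') = f x y - f x y'"
    and "f (s1 c x) y = s3 c (f x y)" "f x (s2 c y) = s3 c (f x y)"
    and "f 0 y = 0" "f x 0 = 0"
proof -
  interpret l: Vector_Spaces.linear s1 s3 "\<lambda>x. f x y"
    using assms by (simp add: bilinear_def)
  interpret r: Vector_Spaces.linear s2 s3 "\<lambda>y. f x y"
    using assms by (simp add: bilinear_def)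
  show "f (x + x') y = f x y + f x' y" "f x (y + y') = f x y + f x y'"
    "f (x - x') y = f x y - f x' y" "f x (y - y') = f x y - f x y'"
    "f (s1 c x) y = s3 c (f x y)" "f x (s2 c y) = s3 c (f x y)" "f 0 y = 0" "f x 0 = 0"
    by (simp_all add: l.add r.add l.diff r.diff l.scale r.scale)
qed

lemma linear_eq_on_spanning_set:
  assumes "Vector_Spaces.linear s1 s2 f" "Vector_Spaces.linear s1 s2 g"
    and "module.span s1 B = UNIV" and "\<And>b. b \<in> B \<Longrightarrow> f b = g b"
  shows "f x = g x"
proof -
  interpret vector_space_pair s1 s2
    using assms(1) by (simp add: linear_iff vector_space_pair_def)
  show ?thesis
    using linear_eq_on[OF assms(1,2)] assms(3,4) by blast
qed

lemma bilinear_eq_on_spanning_sets: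
  assumes f: "bilinear s1 s2 s3 f" and g: "bilinear s1 s2 s3 g"
    and X: "module.span s1 X = UNIV" and Y: "module.span s2 Y = UNIV"
    and eq: "\<And>x y. x \<in> X \<Longrightarrow> y \<in> Y \<Longrightarrow> f x y = g x y"
  shows "f x y = g x y"
proof -
  have f1: "Vector_Spaces.linear s1 s3 (\<lambda>x. f x y)" and f2: "Vector_Spaces.linear s2 s3 (f x)"
    and g1: "Vector_Spaces.linear s1 s3 (\<lambda>x. g x y)" and g2: "Vector_Spaces.linear s2 s3 (g x)"
    for x y using f g by (simp_all add: bilinear_def)
  have "f x' y = g x' y" if "x' \<in> X" for x'
    using linear_eq_on_spanning_set[OF f2 g2 Y] eq[OF that] .
  then show ?thesis
    using linear_eq_on_spanning_set[OF f1[of y] g1[of y] X] by blast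
qed

lemma bilinear_compose_linear:
  assumes "bilinear s1 s2 s3 f" and h: "Vector_Spaces.linear s3 s4 h"
  shows "bilinear s1 s2 s4 (\<lambda>x y. h (f x y))"
proof -
  have "Vector_Spaces.linear s1 s3 (\<lambda>x. f x y)" "Vector_Spaces.linear s2 s3 (f x)" for x y
    using assms(1) by (simp_all add: bilinear_def)
  then have "Vector_Spaces.linear s1 s4 (h \<circ> (\<lambda>x. f x y))" "Vector_Spaces.linear s2 s4 (h \<circ> f x)"
    for x y using Vector_Spaces.linear_compose[OF _ h] by blast+
  then show ?thesis
    by (simp add: bilinear_def comp_def)
qed

lemma bilinear_assoc_on_spanning_set:
  assumes mu: "bilinear s s s mu" and P: "module.span s P = UNIV"
    and assoc: "\<And>x y z. x \<in> P \<Longrightarrow> y \<in> P \<Longrightarrow> z \<in> P \<Longrightarrow> mu (mu x y) z = mu x (mu y z)"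
  shows "mu (mu x y) z = mu x (mu y z)"
proof -
  have vs: "vector_space s"
    using mu by (simp add: bilinear_def linear_iff)
  note mu_simps = bilinear_simps[OF mu]
  have "mu (mu x' y) z = mu x' (mu y z)" if "x' \<in> P" for x'
  proof (rule bilinear_eq_on_spanning_sets[where f = "\<lambda>y z. mu (mu x' y) z" and g = "\<lambda>y z. mu x' (mu y z)",
        OF _ _ P P])
    show "bilinear s s s (\<lambda>y z. mu (mu x' y) z)" "bilinear s s s (\<lambda>y z. mu x' (mu y z))"
      unfolding bilinear_def linear_iff using vs by (simp_all add: mu_simps)
  qed (simp add: assoc that)
  moreover have "Vector_Spaces.linear s s (\<lambda>x. mu (mu x y) z)" "Vector_Spaces.linear s s (\<lambda>x. mu x (mu y z))"
    unfolding linear_iff using vs by (simp_all add: mu_simps)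
  ultimately show ?thesis
    using linear_eq_on_spanning_set[OF _ _ P] by blast
qed

lemma bilinear_extension_from_finite_bases:
  assumes vs: "vector_space s1" "vector_space s2" "vector_space s3"
    and X: "finite X" "is_basis s1 X" and Y: "finite Y" "is_basis s2 Y"
  obtains mu where "bilinear s1 s2 s3 mu" and "\<And>x y. x \<in> X \<Longrightarrow> y \<in> Y \<Longrightarrow> mu x y = g x y"
proof -
  interpret V1: vector_space s1 by (fact vs(1))
  interpret V2: vector_space s2 by (fact vs(2))
  interpret V3: vector_space s3 by (fact vs(3))
  define R1 where "R1 = V1.representation X"
  define R2 where "R2 = V2.representation Y"
  define mu where "mu u v = (\<Sum>x\<in>X. \<Sum>y\<in>Y. s3 (R1 u x * R2 v y) (g x y))" for u v
  have R1: "R1 (u + v) = (\<lambda>x. R1 u x + R1 v x)" "R1 (s1 c u) = (\<lambda>x. c * R1 u x)" for u v c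
    using X(2) V1.representation_add V1.representation_scale by (auto simp: R1_def is_basis_def)
  have R2: "R2 (u + v) = (\<lambda>y. R2 u y + R2 v y)" "R2 (s2 c u) = (\<lambda>y. c * R2 u y)" for u v c
    using Y(2) V2.representation_add V2.representation_scale by (auto simp: R2_def is_basis_def)
  have "bilinear s1 s2 s3 mu"
    unfolding bilinear_def linear_iff using vs
    by (simp add: mu_def R1 R2 algebra_simps V3.scale_left_distrib V3.scale_sum_right sum.distrib)
  moreover have "mu x y = g x y" if "x \<in> X" "y \<in> Y" for x y
  proof -
    have "R1 x = (\<lambda>x'. if x' = x then 1 else 0)" "R2 y = (\<lambda>y'. if y' = y then 1 else 0)"
      using X(2) Y(2) that V1.representation_basis V2.representation_basis
      by (auto simp: R1_def R2_def is_basis_def)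
    moreover have "s3 (if c then 1 else 0) v = (if c then v else 0)" for c v
      by simp
    ultimately have "(\<Sum>y'\<in>Y. s3 (R1 x x' * R2 y y') (g x' y')) = (if x' = x then g x y else 0)" for x'
      using Y(1) that by (cases "x' = x") (simp_all add: sum.delta)
    then show ?thesis
      using X(1) that by (simp add: mu_def sum.delta)
  qed
  ultimately show ?thesis using that by blast
qed

lemma tensor_product_pure_tensors_span:
  assumes "is_tensor_product s1 s2 s3 tp"
  shows "module.span s3 {tp a b |a b. True} = UNIV"
proof -
  interpret vector_space s3
    using assms by (simp add: is_tensor_product_def)
  obtain X Y where "span ((\<lambda>(x, y). tp x y) ` (X \<times> Y)) = UNIV"
    using assms by (auto simp: is_tensor_product_def is_basis_def)
  moreover have "(\<lambda>(x, y). tp x y) ` (X \<times> Y) \<subseteq> {tp a b |a b. True}"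
    by auto
  ultimately show ?thesis
    using span_mono by blast
qed

lemma fin_dim_basis_finite:
  assumes "vector_space s" and "fin_dim s" and "is_basis s X"
  shows "finite X"
proof -
  interpret vector_space s by (fact assms(1))
  obtain X0 where "finite X0" "is_basis s X0"
    using assms(2) by (auto simp: fin_dim_def)
  then show ?thesis
    using independent_span_bound[of X0 X] assms(3) by (simp add: is_basis_def)
qed

lemma tensor_product_lift_bilinear:
  assumes T: "is_tensor_product s1 s2 s3 tp" and fin: "fin_dim s1" "fin_dim s2"
    and F1: "\<And>a' b'. bilinear s1 s2 s3 (\<lambda>a b. F a b a' b')"
    and F2: "\<And>a b. bilinear s1 s2 s3 (F a b)"
  obtains mu where "bilinear s3 s3 s3 mu" and "\<And>a b a' b'. mu (tp a b) (tp a' b') = F a b a' b'"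
proof -
  obtain X Y where X: "is_basis s1 X" and Y: "is_basis s2 Y"
    and inj: "inj_on (\<lambda>(x, y). tp x y) (X \<times> Y)" and Z: "is_basis s3 ((\<lambda>(x, y). tp x y) ` (X \<times> Y))"
    using T unfolding is_tensor_product_def by blast
  have tp: "bilinear s1 s2 s3 tp" and vs3: "vector_space s3"
    using T by (simp_all add: is_tensor_product_def)
  have vs1: "vector_space s1" and vs2: "vector_space s2"
    using tp by (auto simp: bilinear_def linear_iff)
  let ?Z = "(\<lambda>(x, y). tp x y) ` (X \<times> Y)"
  have "finite X" "finite Y"
    using fin_dim_basis_finite vs1 vs2 fin X Y by blast+
  then have finZ: "finite ?Z"
    by simp
  define pre where "pre = inv_into (X \<times> Y) (\<lambda>(x, y). tp x y)"
  obtain mu where mu: "bilinear s3 s3 s3 mu"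
    and mu_basis: "\<And>z z'. z \<in> ?Z \<Longrightarrow> z' \<in> ?Z \<Longrightarrow>
      mu z z' = F (fst (pre z)) (snd (pre z)) (fst (pre z')) (snd (pre z'))"
    by (rule bilinear_extension_from_finite_bases[OF vs3 vs3 vs3 finZ Z finZ Z,
          where g = "\<lambda>z z'. F (fst (pre z)) (snd (pre z)) (fst (pre z')) (snd (pre z'))"]) blast
  have pre: "pre (tp x y) = (x, y)" if "x \<in> X" "y \<in> Y" for x y
    unfolding pre_def using inv_into_f_f[OF inj, of "(x, y)"] that by simp
  have in_Z: "tp x y \<in> ?Z" if "x \<in> X" "y \<in> Y" for x y
    using that by blast
  have linear_mu: "Vector_Spaces.linear s3 s3 (mu u)" "Vector_Spaces.linear s3 s3 (\<lambda>u. mu u v)" for u v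
    using mu by (simp_all add: bilinear_def)
  have spanX: "module.span s1 X = UNIV" and spanY: "module.span s2 Y = UNIV"
    using X Y by (simp_all add: is_basis_def)
  have on_basis: "mu (tp x y) (tp a' b') = F x y a' b'" if "x \<in> X" "y \<in> Y" for x y a' b'
    by (rule bilinear_eq_on_spanning_sets[OF bilinear_compose_linear[OF tp linear_mu(1)] F2 spanX spanY])
       (simp add: mu_basis in_Z pre that)
  show ?thesis
  proof
    show "mu (tp a b) (tp a' b') = F a b a' b'" for a b a' b'
      by (rule bilinear_eq_on_spanning_sets[OF bilinear_compose_linear[OF tp linear_mu(2)] F1 spanX spanY])
         (simp add: on_basis)
  qed (fact mu)
qed

text \<open>With \<open>p a = a\<^sub>1\<close> and \<open>q b = b\<^sub>1\<close> this is the product \<open>(a \<otimes> b) (a' \<otimes> b') = a a' \<otimes> b\<^sub>1 b' + a a'\<^sub>1 \<otimes> b\<^sub>2 b'\<close>.\<close>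
definition twisted_mult ::
  "('a::ring_1 \<Rightarrow> 'a) \<Rightarrow> ('b::ring_1 \<Rightarrow> 'b) \<Rightarrow> ('a \<Rightarrow> 'b \<Rightarrow> 't::ab_group_add) \<Rightarrow> 'a \<Rightarrow> 'b \<Rightarrow> 'a \<Rightarrow> 'b \<Rightarrow> 't"
where
  "twisted_mult p q tp a b a' b' = tp (a * a') (q b * b') + tp (a * p a') ((b - q b) * b')"

lemma twisted_mult_bilinear:
  assumes "k_algebra s1" and "k_algebra s2" and tp: "bilinear s1 s2 s3 tp"
    and p: "idempotent_algebra_endomorphism s1 p" and q: "idempotent_algebra_endomorphism s2 q"
  shows "bilinear s1 s2 s3 (\<lambda>a b. twisted_mult p q tp a b a' b')"
    and "bilinear s1 s2 s3 (twisted_mult p q tp a b)"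
proof -
  interpret V1: vector_space s1 using assms(1) by (simp add: k_algebra_def)
  interpret V2: vector_space s2 using assms(2) by (simp add: k_algebra_def)
  interpret V3: vector_space s3 using tp by (simp add: bilinear_def linear_iff)
  note simps = twisted_mult_def bilinear_simps[OF tp] idempotent_algebra_endomorphism_simps[OF p]
    idempotent_algebra_endomorphism_simps[OF q] V3.scale_right_distrib V2.scale_right_diff_distrib
    algebra_simps
  have scale_mult: "s1 c x * y = s1 c (x * y)" "x * s1 c y = s1 c (x * y)"
    "s2 c u * v = s2 c (u * v)" "u * s2 c v = s2 c (u * v)" for c x y u v
    using assms(1,2) unfolding k_algebra_def by metis+
  show "bilinear s1 s2 s3 (\<lambda>a b. twisted_mult p q tp a b a' b')"
    and "bilinear s1 s2 s3 (twisted_mult p q tp a b)"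
    unfolding bilinear_def linear_iff
    by (simp_all add: simps scale_mult V1.vector_space_axioms V2.vector_space_axioms V3.vector_space_axioms)
qed

lemma twisted_mult_assoc_pure:
  assumes tp: "bilinear s1 s2 s3 tp" and mu: "bilinear s3 s3 s3 mu"
    and p: "idempotent_algebra_endomorphism s1 p" and q: "idempotent_algebra_endomorphism s2 q"
    and mu_tp: "\<And>a b a' b'. mu (tp a b) (tp a' b') = twisted_mult p q tp a b a' b'"
  shows "mu (mu (tp a b) (tp a' b')) (tp a'' b'') = mu (tp a b) (mu (tp a' b') (tp a'' b''))"
  by (simp add: mu_tp twisted_mult_def bilinear_simps[OF tp] bilinear_simps[OF mu]
      idempotent_algebra_endomorphism_simps[OF p] idempotent_algebra_endomorphism_simps[OF q] algebra_simps)

lemma twisted_mult_unit: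
  assumes tp: "bilinear s1 s2 s3 tp"
    and p: "idempotent_algebra_endomorphism s1 p" and q: "idempotent_algebra_endomorphism s2 q"
  shows "twisted_mult p q tp 1 1 a b = tp a b" and "twisted_mult p q tp a b 1 1 = tp a b"
  by (simp_all add: twisted_mult_def bilinear_simps[OF tp]
      idempotent_algebra_endomorphism_simps[OF p] idempotent_algebra_endomorphism_simps[OF q])

lemma twisted_mult_associative_unital:
  assumes T: "is_tensor_product s1 s2 s3 tp"
    and p: "idempotent_algebra_endomorphism s1 p" and q: "idempotent_algebra_endomorphism s2 q"
    and mu: "bilinear s3 s3 s3 mu" and mu_tp: "\<And>a b a' b'. mu (tp a b) (tp a' b') = twisted_mult p q tp a b a' b'"
  shows "mu (mu x y) z = mu x (mu y z)" and "mu (tp 1 1) x = x" and "mu x (tp 1 1) = x"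
proof -
  have tp: "bilinear s1 s2 s3 tp"
    using T by (simp add: is_tensor_product_def)
  note span = tensor_product_pure_tensors_span[OF T]
  have linear: "Vector_Spaces.linear s3 s3 (mu (tp 1 1))" "Vector_Spaces.linear s3 s3 (\<lambda>x. mu x (tp 1 1))"
    "Vector_Spaces.linear s3 s3 (\<lambda>x. x)"
    using mu by (auto simp: bilinear_def linear_iff)
  show "mu (mu x y) z = mu x (mu y z)"
    by (rule bilinear_assoc_on_spanning_set[OF mu span])
       (auto simp: twisted_mult_assoc_pure[OF tp mu p q mu_tp])
  show "mu (tp 1 1) x = x"
    by (rule linear_eq_on_spanning_set[OF linear(1) linear(3) span])
       (auto simp: mu_tp twisted_mult_unit[OF tp p q])
  show "mu x (tp 1 1) = x"
    by (rule linear_eq_on_spanning_set[OF linear(2) linear(3) span])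
       (auto simp: mu_tp twisted_mult_unit[OF tp p q])
qed

theorem mainTheorem3:
  fixes sA :: "'k::field \<Rightarrow> 'a::ring_1 \<Rightarrow> 'a"
    and sB :: "'k \<Rightarrow> 'b::ring_1 \<Rightarrow> 'b"
    and sT :: "'k \<Rightarrow> 't::ab_group_add \<Rightarrow> 't"
    and Abar :: "'a set" and Bbar :: "'b set"
    and tp :: "'a \<Rightarrow> 'b \<Rightarrow> 't"
  assumes "fd_algebra sA" and "elementary sA" and "radical_splitting sA Abar"
    and "fd_algebra sB" and "elementary sB" and "radical_splitting sB Bbar"
    and "is_tensor_product sA sB sT tp"
  shows "(\<forall>a b a' b'.
            tp (a * a') (comp1 sB Bbar b * b') + tp (a * comp1 sA Abar a') (comp2 sB Bbar b * b')
          = tp (a * a') (b * b') - tp (a * comp2 sA Abar a') (comp2 sB Bbar b * b'))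
       \<and> (\<exists>mu. bilinear sT sT sT mu \<and>
            (\<forall>a b a' b'. mu (tp a b) (tp a' b') =
               tp (a * a') (comp1 sB Bbar b * b') + tp (a * comp1 sA Abar a') (comp2 sB Bbar b * b')))
       \<and> (\<forall>mu. bilinear sT sT sT mu \<and>
            (\<forall>a b a' b'. mu (tp a b) (tp a' b') =
               tp (a * a') (comp1 sB Bbar b * b') + tp (a * comp1 sA Abar a') (comp2 sB Bbar b * b'))
          \<longrightarrow> (\<forall>x y z. mu (mu x y) z = mu x (mu y z)) \<and>
              (\<forall>x. mu (tp 1 1) x = x \<and> mu x (tp 1 1) = x))"
proof -
  have kA: "k_algebra sA" and finA: "fin_dim sA" and kB: "k_algebra sB" and finB: "fin_dim sB"
    using assms(1,4) by (simp_all add: fd_algebra_def)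
  have tp: "bilinear sA sB sT tp"
    using assms(7) by (simp add: is_tensor_product_def)
  have pA: "idempotent_algebra_endomorphism sA (comp1 sA Abar)"
    and pB: "idempotent_algebra_endomorphism sB (comp1 sB Bbar)"
    using comp1_idempotent_algebra_endomorphism kA kB assms(3,6) by blast+
  let ?mult = "twisted_mult (comp1 sA Abar) (comp1 sB Bbar) tp"
  have mult: "tp (a * a') (comp1 sB Bbar b * b') + tp (a * comp1 sA Abar a') (comp2 sB Bbar b * b')
      = ?mult a b a' b'" for a b a' b'
    by (simp add: twisted_mult_def comp2_def)
  have "?mult a b a' b' = tp (a * a') (b * b') - tp (a * comp2 sA Abar a') (comp2 sB Bbar b * b')"
    for a b a' b'
    by (simp add: twisted_mult_def comp2_def bilinear_simps[OF tp] algebra_simps)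
  moreover obtain mu where "bilinear sT sT sT mu" "\<And>a b a' b'. mu (tp a b) (tp a' b') = ?mult a b a' b'"
    using tensor_product_lift_bilinear[OF assms(7) finA finB, where F = ?mult]
      twisted_mult_bilinear[OF kA kB tp pA pB] by blast
  moreover note twisted_mult_associative_unital[OF assms(7) pA pB]
  ultimately show ?thesis
    unfolding mult by blast
qed

end
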